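(* Let $\mathfrak{n}$ be a finite dimensional nilpotent Lie algebra over a field of characteristic zero, and let $d\ge 1$. Suppose $\mathfrak{n}=\bigoplus_{\alpha\in\mathbb{Z}_+^d}\mathfrak{n}_\alpha$ is a $\mathbb{Z}_+^d$-grading of $\mathfrak{n}$ with associated polynomial $p$. Then there exist a positive integer $k$ and a grading $\mathfrak{n}=\mathfrak{n}'_1\oplus\mathfrak{n}'_2\oplus\cdots\oplus\mathfrak{n}'_k$ (i.e. a $\mathbb{Z}_+$-grading with $\mathfrak{n}'_j=0$ for $j>k$) whose associated polynomial $p'$ satisfies $L(p')=L(p)$.
   Context: $\mathbb{Z}_+^d$ denotes the set of nonzero $d$-tuples $\alpha=(\alpha_1,\dots,\alpha_d)$ of nonnegative integers. A $\mathbb{Z}_+^d$-grading of a Lie algebra $\mathfrak{n}$ is a vector space decomposition $\mathfrak{n}=\bigoplus_{\alpha\in\mathbb{Z}_+^d}\mathfrak{n}_\alpha$ with $[\mathfrak{n}_\alpha,\mathfrak{n}_\beta]\subset\mathfrak{n}_{\alpha+\beta}$ for all $\alpha,\beta$. Its associated polynomial is $p(x_1,\dots,x_d)=\prod_{\alpha\in\mathbb{Z}_+^d}(1-x_1^{\alpha_1}\cdots x_d^{\alpha_d})^{\dim\mathfrak{n}_\alpha}=\sum_\alpha a_\alpha x_1^{\alpha_1}\cdots x_d^{\alpha_d}\in\mathbb{Z}[x_1,\dots,x_d]$, and the length of $p$ is $L(p)=\sum_\alpha|a_\alpha|$, the sum of the absolute values of its coefficients. A grading $\mathfrak{n}=\mathfrak{n}'_1\oplus\cdots\oplus\mathfrak{n}'_k$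 means $[\mathfrak{n}'_i,\mathfrak{n}'_j]\subset\mathfrak{n}'_{i+j}$ (with $\mathfrak{n}'_m=0$ for $m>k$), i.e. the case $d=1$, with associated polynomial $p'(x)=\prod_{i=1}^k(1-x^i)^{\dim\mathfrak{n}'_i}$. *)

theory Defs
  imports Main "HOL-Library.Poly_Mapping" "HOL-Computational_Algebra.Polynomial"
begin

definition lie_algebra :: "('k::field \<Rightarrow> 'v::ab_group_add \<Rightarrow> 'v) \<Rightarrow> ('v \<Rightarrow> 'v \<Rightarrow> 'v) \<Rightarrow> bool" where
  "lie_algebra scale br \<longleftrightarrow>
     vector_space scale \<and>
     (\<forall>x y z. br (x + y) z = br x z + br y z) \<and>
     (\<forall>x y z. br x (y + z) = br x y + br x z) \<and>
     (\<forall>c x y. br (scale c x) y = scale c (br x y)) \<and>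
     (\<forall>c x y. br x (scale c y) = scale c (br x y)) \<and>
     (\<forall>x. br x x = 0) \<and>
     (\<forall>x y z. br x (br y z) + br y (br z x) + br z (br x y) = 0)"

definition fin_dim :: "('k::field \<Rightarrow> 'v::ab_group_add \<Rightarrow> 'v) \<Rightarrow> bool" where
  "fin_dim scale \<longleftrightarrow> (\<exists>B. finite B \<and> module.span scale B = UNIV)"

fun lower_central :: "('k::field \<Rightarrow> 'v::ab_group_add \<Rightarrow> 'v) \<Rightarrow> ('v \<Rightarrow> 'v \<Rightarrow> 'v) \<Rightarrow> nat \<Rightarrow> 'v set" where
  "lower_central scale br 0 = UNIV"
| "lower_central scale br (Suc i) = module.span scale {br x y | x y. y \<in> lower_central scale br i}"

definition nilpotent_lie :: "('k::field \<Rightarrow> 'v::ab_group_add \<Rightarrow> 'v) \<Rightarrow> ('v \<Rightarrow> 'v \<Rightarrow> 'v) \<Rightarrow> bool" where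
  "nilpotent_lie scale br \<longleftrightarrow> (\<exists>m. lower_central scale br m = {0})"

definition is_direct_sum :: "('k::field \<Rightarrow> 'v::ab_group_add \<Rightarrow> 'v) \<Rightarrow> 'i set \<Rightarrow> ('i \<Rightarrow> 'v set) \<Rightarrow> bool" where
  "is_direct_sum scale I W \<longleftrightarrow>
     (\<forall>i\<in>I. module.subspace scale (W i)) \<and>
     module.span scale (\<Union>i\<in>I. W i) = UNIV \<and>
     (\<forall>S f. finite S \<and> S \<subseteq> I \<and> (\<forall>i\<in>S. f i \<in> W i) \<and> sum f S = 0 \<longrightarrow> (\<forall>i\<in>S. f i = 0))"

text \<open>Z_+^d: nonzero d-tuples of naturals, encoded as finitely supported maps nat =>0 nat
  with support in {0..<d} (coordinate j is lookup alpha j).\<close>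
definition Zplus :: "nat \<Rightarrow> (nat \<Rightarrow>\<^sub>0 nat) set" where
  "Zplus d = {\<alpha>. Poly_Mapping.keys \<alpha> \<subseteq> {..<d} \<and> \<alpha> \<noteq> 0}"

definition Zd_grading :: "('k::field \<Rightarrow> 'v::ab_group_add \<Rightarrow> 'v) \<Rightarrow> ('v \<Rightarrow> 'v \<Rightarrow> 'v) \<Rightarrow> nat \<Rightarrow> ((nat \<Rightarrow>\<^sub>0 nat) \<Rightarrow> 'v set) \<Rightarrow> bool" where
  "Zd_grading scale br d g \<longleftrightarrow>
     is_direct_sum scale (Zplus d) g \<and>
     (\<forall>\<alpha>\<in>Zplus d. \<forall>\<beta>\<in>Zplus d. \<forall>x\<in>g \<alpha>. \<forall>y\<in>g \<beta>. br x y \<in> g (\<alpha> + \<beta>))"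

text \<open>Multivariate integer polynomials in x_0,...,x_{d-1} as (nat =>0 nat) =>0 int;
  the monomial x^alpha is Poly_Mapping.single alpha 1.  Factors with dim = 0 equal 1, so the
  product is taken over the (finitely many) nonzero homogeneous components.\<close>
definition assoc_poly :: "('k::field \<Rightarrow> 'v::ab_group_add \<Rightarrow> 'v) \<Rightarrow> nat \<Rightarrow> ((nat \<Rightarrow>\<^sub>0 nat) \<Rightarrow> 'v set) \<Rightarrow> ((nat \<Rightarrow>\<^sub>0 nat) \<Rightarrow>\<^sub>0 int)" where
  "assoc_poly scale d g =
     (\<Prod>\<alpha>\<in>{\<alpha>\<in>Zplus d. g \<alpha> \<noteq> {0}}. (1 - Poly_Mapping.single \<alpha> 1) ^ vector_space.dim scale (g \<alpha>))"

definition mpoly_length :: "((nat \<Rightarrow>\<^sub>0 nat) \<Rightarrow>\<^sub>0 int) \<Rightarrow> int" where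
  "mpoly_length p = (\<Sum>m\<in>Poly_Mapping.keys p. \<bar>Poly_Mapping.lookup p m\<bar>)"

definition k_grading :: "('k::field \<Rightarrow> 'v::ab_group_add \<Rightarrow> 'v) \<Rightarrow> ('v \<Rightarrow> 'v \<Rightarrow> 'v) \<Rightarrow> nat \<Rightarrow> (nat \<Rightarrow> 'v set) \<Rightarrow> bool" where
  "k_grading scale br k g \<longleftrightarrow>
     is_direct_sum scale {1..k} g \<and>
     (\<forall>i\<in>{1..k}. \<forall>j\<in>{1..k}. \<forall>x\<in>g i. \<forall>y\<in>g j. br x y \<in> (if i + j \<le> k then g (i + j) else {0}))"

definition assoc_poly1 :: "('k::field \<Rightarrow> 'v::ab_group_add \<Rightarrow> 'v) \<Rightarrow> nat \<Rightarrow> (nat \<Rightarrow> 'v set) \<Rightarrow> int poly" where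
  "assoc_poly1 scale k g = (\<Prod>i\<in>{1..k}. (1 - monom 1 i) ^ vector_space.dim scale (g i))"

definition poly_length :: "int poly \<Rightarrow> int" where
  "poly_length p = (\<Sum>i\<le>degree p. \<bar>coeff p i\<bar>)"

end

theory Submission
  imports Defs
begin

text \<open>
  Fix \<open>N\<close> larger than every exponent occurring in \<open>p\<close> and let
  \<open>\<phi>(\<alpha>) = \<Sum>\<^sub>j \<alpha>\<^sub>j N\<^sup>j\<close>. This map is additive, positive on \<open>\<int>\<^sub>+\<^sup>d\<close>, and injective on the exponents of
  \<open>p\<close> (uniqueness of base-\<open>N\<close> digits). Grouping the homogeneous components along \<open>\<phi>\<close>,
  \<open>n'\<^sub>i = \<Oplus>\<^bsub>\<phi>(\<alpha>) = i\<^esub> n\<^sub>\<alpha>\<close>, gives a grading by \<open>1, \<dots>, k\<close> with \<open>k = max \<phi>\<close>. Its polynomial is \<open>p\<close>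
  with every monomial \<open>x\<^sup>\<alpha>\<close> replaced by \<open>x\<^bsup>\<phi>(\<alpha>)\<^esup>\<close>; since \<open>\<phi>\<close> does not merge monomials of \<open>p\<close>, this
  only relabels the coefficients and the length is unchanged.
\<close>

section \<open>Base-\<open>N\<close> digits\<close>

lemma sum_digits_less_power:
  fixes a :: "nat \<Rightarrow> nat"
  assumes "\<And>j. j < d \<Longrightarrow> a j < N"
  shows "(\<Sum>j<d. a j * N ^ j) < N ^ d"
  using assms
proof (induction d)
  case (Suc d)
  have "(\<Sum>j<d. a j * N ^ j) < N ^ d" using Suc by auto
  moreover have "a d + 1 \<le> N" using Suc.prems[of d] by simp
  then have "(a d + 1) * N ^ d \<le> N * N ^ d" by (rule mult_right_mono) simp
  ultimately show ?case by (simp add: algebra_simps)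
qed simp

lemma sum_digits_eq_imp_eq:
  fixes a b :: "nat \<Rightarrow> nat"
  assumes "\<And>j. j < d \<Longrightarrow> a j < N" "\<And>j. j < d \<Longrightarrow> b j < N"
    and "(\<Sum>j<d. a j * N ^ j) = (\<Sum>j<d. b j * N ^ j)" "j < d"
  shows "a j = b j"
  using assms
proof (induction d)
  case (Suc d)
  let ?a = "\<Sum>j<d. a j * N ^ j" and ?b = "\<Sum>j<d. b j * N ^ j"
  have less: "?a < N ^ d" "?b < N ^ d" using Suc.prems by (auto intro: sum_digits_less_power)
  have eq: "?a + a d * N ^ d = ?b + b d * N ^ d" using Suc.prems(3) by simp
  have pos: "N ^ d > 0" using less(1) by linarith
  \<comment> \<open>Quotient and remainder modulo \<open>N ^ d\<close> recover the top digit and the lower digits.\<close>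
  have "a d = (?a + a d * N ^ d) div N ^ d" using less(1) pos by simp
  also have "\<dots> = b d" unfolding eq using less(2) pos by simp
  finally have "a d = b d" .
  moreover have "?a = (?a + a d * N ^ d) mod N ^ d" using less(1) by simp
  then have "?a = ?b" unfolding eq using less(2) by simp
  ultimately show ?case using Suc by (cases "j = d") auto
qed simp

definition digit_weight :: "nat \<Rightarrow> nat \<Rightarrow> (nat \<Rightarrow>\<^sub>0 nat) \<Rightarrow> nat" where
  "digit_weight d N m = (\<Sum>j<d. Poly_Mapping.lookup m j * N ^ j)"

lemma digit_weight_add: "digit_weight d N (a + b) = digit_weight d N a + digit_weight d N b"
  by (simp add: digit_weight_def lookup_add sum.distrib algebra_simps)

lemma digit_weight_pos:
  assumes "N > 0" "\<alpha> \<in> Zplus d"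
  shows "digit_weight d N \<alpha> > 0"
proof -
  have "\<alpha> \<noteq> 0" using assms(2) unfolding Zplus_def by blast
  then obtain j where j: "Poly_Mapping.lookup \<alpha> j \<noteq> 0"
    using poly_mapping_eqI[of \<alpha> 0] by auto
  then have "j \<in> Poly_Mapping.keys \<alpha>" by (simp add: in_keys_iff)
  then have "j < d" using assms(2) unfolding Zplus_def by blast
  have "0 < Poly_Mapping.lookup \<alpha> j * N ^ j" using j assms(1) by simp
  also have "\<dots> \<le> digit_weight d N \<alpha>"
    unfolding digit_weight_def using \<open>j < d\<close> by (intro member_le_sum) auto
  finally show ?thesis .
qed

lemma inj_on_digit_weight:
  "inj_on (digit_weight d N) {m. Poly_Mapping.keys m \<subseteq> {..<d} \<and> (\<forall>j. Poly_Mapping.lookup m j < N)}"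
proof (rule inj_onI)
  fix m m' assume m: "m \<in> {m. Poly_Mapping.keys m \<subseteq> {..<d} \<and> (\<forall>j. Poly_Mapping.lookup m j < N)}"
    and m': "m' \<in> {m. Poly_Mapping.keys m \<subseteq> {..<d} \<and> (\<forall>j. Poly_Mapping.lookup m j < N)}"
    and eq: "digit_weight d N m = digit_weight d N m'"
  show "m = m'"
  proof (rule poly_mapping_eqI)
    fix j
    show "Poly_Mapping.lookup m j = Poly_Mapping.lookup m' j"
    proof (cases "j < d")
      case True
      show ?thesis
        by (rule sum_digits_eq_imp_eq[of d _ N, OF _ _ eq[unfolded digit_weight_def] True])
          (use m m' in auto)
    next
      case False
      then have "j \<notin> Poly_Mapping.keys m" "j \<notin> Poly_Mapping.keys m'" using m m' by auto
      then show ?thesis by (simp add: in_keys_iff)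
    qed
  qed
qed

lemma digit_weight_inj_on_finite:
  assumes "finite K" "\<And>m. m \<in> K \<Longrightarrow> Poly_Mapping.keys m \<subseteq> {..<d}"
  obtains N where "N > 0" "inj_on (digit_weight d N) K"
proof
  define N where "N = Suc (\<Sum>m\<in>K. \<Sum>j<d. Poly_Mapping.lookup m j)"
  show "N > 0" by (simp add: N_def)
  have "Poly_Mapping.lookup m j < N" if "m \<in> K" for m j
  proof (cases "j < d")
    case True
    have "Poly_Mapping.lookup m j \<le> (\<Sum>j<d. Poly_Mapping.lookup m j)"
      using True by (intro member_le_sum) auto
    also have "\<dots> \<le> (\<Sum>m\<in>K. \<Sum>j<d. Poly_Mapping.lookup m j)"
      using that assms(1) by (intro member_le_sum) auto
    finally show ?thesis by (simp add: N_def)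
  next
    case False
    then have "j \<notin> Poly_Mapping.keys m" using assms(2)[OF that] by auto
    then show ?thesis by (simp add: N_def in_keys_iff)
  qed
  then have "K \<subseteq> {m. Poly_Mapping.keys m \<subseteq> {..<d} \<and> (\<forall>j. Poly_Mapping.lookup m j < N)}"
    using assms(2) by blast
  then show "inj_on (digit_weight d N) K" by (rule inj_on_subset[OF inj_on_digit_weight])
qed

section \<open>Substituting monomials\<close>

definition subst_monomials :: "('m \<Rightarrow> nat) \<Rightarrow> ('m \<Rightarrow>\<^sub>0 'a::comm_ring_1) \<Rightarrow> 'a poly" where
  "subst_monomials \<phi> p = (\<Sum>m\<in>Poly_Mapping.keys p. monom (Poly_Mapping.lookup p m) (\<phi> m))"

lemma subst_monomials_superset:
  assumes "finite S" "Poly_Mapping.keys p \<subseteq> S"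
  shows "subst_monomials \<phi> p = (\<Sum>m\<in>S. monom (Poly_Mapping.lookup p m) (\<phi> m))"
  unfolding subst_monomials_def
  by (rule sum.mono_neutral_left) (use assms in \<open>auto simp: in_keys_iff\<close>)

lemma subst_monomials_add: "subst_monomials \<phi> (p + q) = subst_monomials \<phi> p + subst_monomials \<phi> q"
proof -
  let ?S = "Poly_Mapping.keys p \<union> Poly_Mapping.keys q"
  have "subst_monomials \<phi> (p + q) = (\<Sum>m\<in>?S. monom (Poly_Mapping.lookup (p + q) m) (\<phi> m))"
    by (rule subst_monomials_superset) (auto simp: keys_add)
  also have "\<dots> = subst_monomials \<phi> p + subst_monomials \<phi> q"
    by (simp add: lookup_add add_monom[symmetric] sum.distrib subst_monomials_superset[where S = ?S])
  finally show ?thesis .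
qed

lemma subst_monomials_diff: "subst_monomials \<phi> (p - q) = subst_monomials \<phi> p - subst_monomials \<phi> q"
proof -
  let ?S = "Poly_Mapping.keys p \<union> Poly_Mapping.keys q"
  have "subst_monomials \<phi> (p - q) = (\<Sum>m\<in>?S. monom (Poly_Mapping.lookup (p - q) m) (\<phi> m))"
    by (rule subst_monomials_superset) (auto dest: set_mp[OF keys_diff])
  also have "\<dots> = subst_monomials \<phi> p - subst_monomials \<phi> q"
    by (simp add: lookup_minus diff_monom[symmetric] sum_subtractf subst_monomials_superset[where S = ?S])
  finally show ?thesis .
qed

lemma subst_monomials_single [simp]: "subst_monomials \<phi> (Poly_Mapping.single m c) = monom c (\<phi> m)"
  by (cases "c = 0") (auto simp: subst_monomials_def)

lemma subst_monomials_zero [simp]: "subst_monomials \<phi> 0 = 0"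
  by (simp add: subst_monomials_def)

lemma subst_monomials_sum: "subst_monomials \<phi> (sum f S) = (\<Sum>s\<in>S. subst_monomials \<phi> (f s))"
  by (induction S rule: infinite_finite_induct) (simp_all add: subst_monomials_add)

lemma poly_mapping_sum_single: "p = (\<Sum>m\<in>Poly_Mapping.keys p. Poly_Mapping.single m (Poly_Mapping.lookup p m))"
  by (rule poly_mapping_eqI)
     (auto simp: lookup_sum lookup_single when_def in_keys_iff sum.delta' split: if_splits)

lemma subst_monomials_mult:
  fixes p q :: "'m::comm_monoid_add \<Rightarrow>\<^sub>0 'a::comm_ring_1"
  assumes "\<And>a b. \<phi> (a + b) = \<phi> a + \<phi> b"
  shows "subst_monomials \<phi> (p * q) = subst_monomials \<phi> p * subst_monomials \<phi> q"
proof -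
  let ?P = "Poly_Mapping.keys p" and ?Q = "Poly_Mapping.keys q"
  have "p * q = (\<Sum>m\<in>?P. Poly_Mapping.single m (Poly_Mapping.lookup p m)) *
                (\<Sum>m\<in>?Q. Poly_Mapping.single m (Poly_Mapping.lookup q m))"
    by (subst poly_mapping_sum_single[of p], subst poly_mapping_sum_single[of q]) (rule refl)
  also have "\<dots> = (\<Sum>m\<in>?P. \<Sum>m'\<in>?Q. Poly_Mapping.single (m + m') (Poly_Mapping.lookup p m * Poly_Mapping.lookup q m'))"
    by (simp add: sum_distrib_left sum_distrib_right mult_single sum.swap[of _ ?Q])
  finally have "subst_monomials \<phi> (p * q) =
      (\<Sum>m\<in>?P. \<Sum>m'\<in>?Q. monom (Poly_Mapping.lookup p m) (\<phi> m) * monom (Poly_Mapping.lookup q m') (\<phi> m'))"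
    by (simp add: subst_monomials_sum assms mult_monom)
  also have "\<dots> = subst_monomials \<phi> p * subst_monomials \<phi> q"
    by (simp add: subst_monomials_def sum_distrib_left sum_distrib_right sum.swap[of _ ?Q])
  finally show ?thesis .
qed

lemma subst_monomials_one:
  assumes "\<phi> 0 = 0"
  shows "subst_monomials \<phi> 1 = 1"
  by (simp flip: single_one add: assms monom_0 one_pCons)

lemma subst_monomials_prod:
  fixes f :: "'b \<Rightarrow> 'm::comm_monoid_add \<Rightarrow>\<^sub>0 'a::comm_ring_1"
  assumes "\<And>a b. \<phi> (a + b) = \<phi> a + \<phi> b" "\<phi> 0 = 0"
  shows "subst_monomials \<phi> (prod f S) = (\<Prod>s\<in>S. subst_monomials \<phi> (f s))"
  by (induction S rule: infinite_finite_induct) (simp_all add: subst_monomials_one assms subst_monomials_mult)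

lemma subst_monomials_power:
  fixes p :: "'m::comm_monoid_add \<Rightarrow>\<^sub>0 'a::comm_ring_1"
  assumes "\<And>a b. \<phi> (a + b) = \<phi> a + \<phi> b" "\<phi> 0 = 0"
  shows "subst_monomials \<phi> (p ^ n) = subst_monomials \<phi> p ^ n"
  using subst_monomials_prod[OF assms, of "\<lambda>_. p" "{..<n}"] by simp

lemma poly_length_subst_monomials:
  assumes "inj_on \<phi> (Poly_Mapping.keys p)"
  shows "poly_length (subst_monomials \<phi> p) = mpoly_length p"
proof -
  let ?K = "Poly_Mapping.keys p" and ?q = "subst_monomials \<phi> p"
  have coeff: "coeff ?q n = (\<Sum>m\<in>?K. if \<phi> m = n then Poly_Mapping.lookup p m else 0)" for n
    by (simp add: subst_monomials_def coeff_sum)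
  have coeff_image: "coeff ?q (\<phi> m) = Poly_Mapping.lookup p m" if "m \<in> ?K" for m
  proof -
    have "(\<Sum>m'\<in>?K. if \<phi> m' = \<phi> m then Poly_Mapping.lookup p m' else 0) =
          (\<Sum>m'\<in>?K. if m' = m then Poly_Mapping.lookup p m' else 0)"
      by (rule sum.cong) (use assms that in \<open>auto dest: inj_onD\<close>)
    then show ?thesis using that by (simp add: coeff)
  qed
  have coeff_outside: "coeff ?q n = 0" if "n \<notin> \<phi> ` ?K" for n
    using that by (auto simp: coeff intro!: sum.neutral)
  have "\<phi> ` ?K \<subseteq> {..degree ?q}"
    using coeff_image by (auto intro!: le_degree simp: in_keys_iff)
  then have "poly_length ?q = (\<Sum>i\<in>\<phi> ` ?K. \<bar>coeff ?q i\<bar>)"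
    unfolding poly_length_def by (intro sum.mono_neutral_right) (use coeff_outside in auto)
  also have "\<dots> = (\<Sum>m\<in>?K. \<bar>coeff ?q (\<phi> m)\<bar>)"
    by (rule sum.reindex[OF assms, unfolded comp_def])
  also have "\<dots> = mpoly_length p"
    unfolding mpoly_length_def by (rule sum.cong) (simp_all add: coeff_image)
  finally show ?thesis .
qed

lemma keys_prod_subset_submonoid:
  fixes f :: "'b \<Rightarrow> 'm::comm_monoid_add \<Rightarrow>\<^sub>0 'a::comm_semiring_1"
  assumes "0 \<in> M" "\<And>x y. x \<in> M \<Longrightarrow> y \<in> M \<Longrightarrow> x + y \<in> M"
    and "\<And>s. s \<in> S \<Longrightarrow> Poly_Mapping.keys (f s) \<subseteq> M"
  shows "Poly_Mapping.keys (prod f S) \<subseteq> M"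
  using assms(3)
proof (induction S rule: infinite_finite_induct)
  case (insert s S)
  then show ?case using keys_mult[of "f s" "prod f S"] assms(2) by (fastforce simp: subset_iff)
qed (use assms(1) in auto)

lemma keys_power_subset_submonoid:
  fixes p :: "'m::comm_monoid_add \<Rightarrow>\<^sub>0 'a::comm_semiring_1"
  assumes "Poly_Mapping.keys p \<subseteq> M" "0 \<in> M" "\<And>x y. x \<in> M \<Longrightarrow> y \<in> M \<Longrightarrow> x + y \<in> M"
  shows "Poly_Mapping.keys (p ^ n) \<subseteq> M"
  using keys_prod_subset_submonoid[of M "{..<n}" "\<lambda>_. p", OF assms(2,3)] assms(1) by simp

section \<open>Independent families of subspaces\<close>

definition independent_subspaces :: "('k::field \<Rightarrow> 'v::ab_group_add \<Rightarrow> 'v) \<Rightarrow> 'i set \<Rightarrow> ('i \<Rightarrow> 'v set) \<Rightarrow> bool" where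
  "independent_subspaces scale I W \<longleftrightarrow>
     (\<forall>S f. finite S \<and> S \<subseteq> I \<and> (\<forall>i\<in>S. f i \<in> W i) \<and> sum f S = 0 \<longrightarrow> (\<forall>i\<in>S. f i = 0))"

context vector_space begin

lemma independent_subspacesD:
  assumes "independent_subspaces scale I W" "finite S" "S \<subseteq> I" "\<And>i. i \<in> S \<Longrightarrow> f i \<in> W i"
    and "sum f S = 0" "i \<in> S"
  shows "f i = 0"
  using assms unfolding independent_subspaces_def by blast

lemma independent_subspaces_subset:
  "independent_subspaces scale I W \<Longrightarrow> J \<subseteq> I \<Longrightarrow> independent_subspaces scale J W"
  unfolding independent_subspaces_def by blast

lemma is_direct_sum_iff:
  "is_direct_sum scale I W \<longleftrightarrow>
     (\<forall>i\<in>I. subspace (W i)) \<and> span (\<Union>i\<in>I. W i) = UNIV \<and> independent_subspaces scale I W"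
  unfolding is_direct_sum_def independent_subspaces_def ..

lemma span_UN_subspaces_decompose:
  assumes "finite F" "\<And>a. a \<in> F \<Longrightarrow> subspace (W a)" "x \<in> span (\<Union>a\<in>F. W a)"
  obtains h where "\<And>a. a \<in> F \<Longrightarrow> h a \<in> W a" "x = sum h F"
proof -
  have "\<exists>h. (\<forall>a\<in>F. h a \<in> W a) \<and> x = sum h F"
    using assms
  proof (induction F arbitrary: x rule: finite_induct)
    case (insert a F)
    obtain y z where yz: "x = y + z" "y \<in> span (W a)" "z \<in> span (\<Union>b\<in>F. W b)"
      using insert.prems(2) unfolding UN_insert span_Un by blast
    have "y \<in> W a" using yz(2) span_minimal[OF order_refl insert.prems(1)[of a]] by blast
    obtain h where h: "\<forall>b\<in>F. h b \<in> W b" "z = sum h F"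
      using insert.IH[OF _ yz(3)] insert.prems(1) by auto
    have "sum (h(a := y)) F = sum h F" using insert.hyps(2) by (intro sum.cong) auto
    then have "sum (h(a := y)) (insert a F) = x" using insert.hyps yz(1) h(2) by simp
    moreover have "\<forall>b\<in>insert a F. (h(a := y)) b \<in> W b" using h \<open>y \<in> W a\<close> by auto
    ultimately show ?case by metis
  qed simp
  then show thesis using that by blast
qed

end

context finite_dimensional_vector_space begin

lemma dim_span_UN_independent_subspaces:
  assumes "finite F" "\<And>a. a \<in> F \<Longrightarrow> subspace (W a)" "independent_subspaces scale F W"
  shows "dim (span (\<Union>a\<in>F. W a)) = (\<Sum>a\<in>F. dim (W a))"
  using assms
proof (induction F rule: finite_induct)
  case (insert a F)
  define T where "T = span (\<Union>b\<in>F. W b)"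
  have sa: "subspace (W a)" and sub: "\<And>b. b \<in> F \<Longrightarrow> subspace (W b)"
    using insert.prems(1) by auto
  have "dim T = (\<Sum>b\<in>F. dim (W b))"
    unfolding T_def
    using insert.IH[OF sub independent_subspaces_subset[OF insert.prems(2)]] by blast
  have span_insert: "span (\<Union>b\<in>insert a F. W b) = {x + y |x y. x \<in> W a \<and> y \<in> T}"
    using span_subspace[OF order_refl span_superset sa] by (simp only: UN_insert span_Un T_def)
  have "W a \<inter> T \<subseteq> {0}"
  proof
    fix x assume x: "x \<in> W a \<inter> T"
    then have "x \<in> span (\<Union>b\<in>F. W b)" by (simp add: T_def)
    then obtain h where h: "\<And>b. b \<in> F \<Longrightarrow> h b \<in> W b" "x = sum h F"
      using span_UN_subspaces_decompose[of F W, OF insert.hyps(1) sub] by blast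
    define f where "f = h(a := -x)"
    have "sum f F = sum h F" unfolding f_def using insert.hyps(2) by (intro sum.cong) auto
    then have "sum f (insert a F) = 0" unfolding f_def using insert.hyps h(2) by simp
    moreover have "f b \<in> W b" if "b \<in> insert a F" for b
      using that h(1) x subspace_neg[OF sa] insert.hyps(2) unfolding f_def by auto
    ultimately have "f a = 0"
      using independent_subspacesD[OF insert.prems(2), of "insert a F" f a] insert.hyps(1) by blast
    then show "x \<in> {0}" by (simp add: f_def)
  qed
  then have "dim (W a \<inter> T) = 0" by (simp only: dim_eq_0)
  then have "dim (span (\<Union>b\<in>insert a F. W b)) = dim (W a) + dim T"
    using dim_sums_Int[OF sa subspace_span[of "\<Union>b\<in>F. W b"]] unfolding span_insert T_def by linarith
  then show ?case using \<open>dim T = _\<close> insert.hyps by simp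
qed simp

lemma finite_nonzero_independent_subspaces:
  assumes "\<And>a. a \<in> I \<Longrightarrow> subspace (W a)" "independent_subspaces scale I W"
  shows "finite {a\<in>I. W a \<noteq> {0}}"
proof (rule ccontr)
  assume "infinite {a\<in>I. W a \<noteq> {0}}"
  then obtain S where S: "finite S" "card S = Suc dimension" "S \<subseteq> {a\<in>I. W a \<noteq> {0}}"
    using infinite_arbitrarily_large by blast
  have "card S = (\<Sum>a\<in>S. 1)" by simp
  also have "\<dots> \<le> (\<Sum>a\<in>S. dim (W a))"
  proof (rule sum_mono)
    fix a assume "a \<in> S"
    then have "\<not> W a \<subseteq> {0}" using S assms(1) subspace_0 by blast
    then have "dim (W a) \<noteq> 0" by simp
    then show "1 \<le> dim (W a)" by linarith
  qed
  also have "\<dots> = dim (span (\<Union>a\<in>S. W a))"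
  proof (rule dim_span_UN_independent_subspaces[symmetric])
    have "S \<subseteq> I" using S(3) by blast
    then show "\<And>a. a \<in> S \<Longrightarrow> subspace (W a)" "independent_subspaces scale S W"
      using assms independent_subspaces_subset by blast+
  qed fact
  also have "\<dots> \<le> dimension" by (rule dim_subset_UNIV)
  finally show False using S by simp
qed

end

section \<open>Coarsening a grading\<close>

definition coarsening ::
    "('k::field \<Rightarrow> 'v::ab_group_add \<Rightarrow> 'v) \<Rightarrow> 'a set \<Rightarrow> ('a \<Rightarrow> nat) \<Rightarrow> ('a \<Rightarrow> 'v set) \<Rightarrow> nat \<Rightarrow> 'v set" where
  "coarsening scale A \<phi> W i = module.span scale (\<Union>\<alpha>\<in>{\<alpha>\<in>A. \<phi> \<alpha> = i}. W \<alpha>)"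

lemma sum_left_additive:
  fixes br :: "'v::comm_monoid_add \<Rightarrow> 'w \<Rightarrow> 'u::cancel_comm_monoid_add"
  assumes "\<And>x y z. br (x + y) z = br x z + br y z"
  shows "br (sum f S) y = (\<Sum>s\<in>S. br (f s) y)"
proof -
  have "br 0 y = 0" using assms[of 0 0 y] by simp
  then show ?thesis by (induction S rule: infinite_finite_induct) (simp_all add: assms)
qed

lemma sum_right_additive:
  fixes br :: "'w \<Rightarrow> 'v::comm_monoid_add \<Rightarrow> 'u::cancel_comm_monoid_add"
  assumes "\<And>x y z. br x (y + z) = br x y + br x z"
  shows "br x (sum f S) = (\<Sum>s\<in>S. br x (f s))"
proof -
  have "br x 0 = 0" using assms[of x 0 0] by simp
  then show ?thesis by (induction S rule: infinite_finite_induct) (simp_all add: assms)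
qed

context vector_space begin

lemma subspace_coarsening: "subspace (coarsening scale A \<phi> W i)"
  unfolding coarsening_def by (rule subspace_span)

lemma subset_coarsening: "\<alpha> \<in> A \<Longrightarrow> W \<alpha> \<subseteq> coarsening scale A \<phi> W (\<phi> \<alpha>)"
  unfolding coarsening_def by (auto intro: span_base)

lemma coarsening_eq_zero:
  assumes "i \<notin> \<phi> ` A"
  shows "coarsening scale A \<phi> W i = {0}"
proof -
  have "{\<alpha>\<in>A. \<phi> \<alpha> = i} = {}" using assms by auto
  then show ?thesis unfolding coarsening_def by (simp only: UN_empty span_empty)
qed

lemma coarsening_decompose:
  assumes "finite A" "\<And>\<alpha>. \<alpha> \<in> A \<Longrightarrow> subspace (W \<alpha>)" "x \<in> coarsening scale A \<phi> W i"
  obtains h where "\<And>\<alpha>. \<alpha> \<in> A \<Longrightarrow> \<phi> \<alpha> = i \<Longrightarrow> h \<alpha> \<in> W \<alpha>" "x = sum h {\<alpha>\<in>A. \<phi> \<alpha> = i}"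
proof -
  have "finite {\<alpha>\<in>A. \<phi> \<alpha> = i}" "\<And>\<alpha>. \<alpha> \<in> {\<alpha>\<in>A. \<phi> \<alpha> = i} \<Longrightarrow> subspace (W \<alpha>)"
    "x \<in> span (\<Union>\<alpha>\<in>{\<alpha>\<in>A. \<phi> \<alpha> = i}. W \<alpha>)"
    using assms unfolding coarsening_def by auto
  from span_UN_subspaces_decompose[of _ W x, OF this] that show thesis by blast
qed

lemma independent_subspaces_coarsening:
  assumes "finite A" "\<And>\<alpha>. \<alpha> \<in> A \<Longrightarrow> subspace (W \<alpha>)" "independent_subspaces scale A W"
  shows "independent_subspaces scale J (coarsening scale A \<phi> W)"
  unfolding independent_subspaces_def
proof (intro allI impI)
  fix S f
  assume "finite S \<and> S \<subseteq> J \<and> (\<forall>i\<in>S. f i \<in> coarsening scale A \<phi> W i) \<and> sum f S = 0"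
  then have S: "finite S" "\<And>i. i \<in> S \<Longrightarrow> f i \<in> coarsening scale A \<phi> W i" "sum f S = 0"
    by auto
  let ?F = "\<lambda>i. {\<alpha>\<in>A. \<phi> \<alpha> = i}"
  have "\<forall>i\<in>S. \<exists>h. (\<forall>\<alpha>\<in>?F i. h \<alpha> \<in> W \<alpha>) \<and> f i = sum h (?F i)"
  proof
    fix i assume "i \<in> S"
    then obtain h where "\<And>\<alpha>. \<alpha> \<in> A \<Longrightarrow> \<phi> \<alpha> = i \<Longrightarrow> h \<alpha> \<in> W \<alpha>" "f i = sum h (?F i)"
      using coarsening_decompose[OF assms(1,2) S(2)] by blast
    then show "\<exists>h. (\<forall>\<alpha>\<in>?F i. h \<alpha> \<in> W \<alpha>) \<and> f i = sum h (?F i)" by auto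
  qed
  from bchoice[OF this] obtain H
    where H: "\<forall>i\<in>S. (\<forall>\<alpha>\<in>?F i. H i \<alpha> \<in> W \<alpha>) \<and> f i = sum (H i) (?F i)"
    by blast
  \<comment> \<open>The fibres of \<open>\<phi>\<close> are disjoint, so the components of all \<open>f i\<close> assemble into one family.\<close>
  define G where "G \<alpha> = H (\<phi> \<alpha>) \<alpha>" for \<alpha>
  define U where "U = (\<Union>i\<in>S. ?F i)"
  have f_eq: "f i = sum G (?F i)" if "i \<in> S" for i
    using H that by (simp add: G_def)
  have "sum G U = (\<Sum>i\<in>S. sum G (?F i))"
    unfolding U_def using S(1) assms(1) by (intro sum.UNION_disjoint) auto
  then have "sum G U = 0" using S(3) f_eq by simp
  moreover have "G \<alpha> \<in> W \<alpha>" if "\<alpha> \<in> U" for \<alpha>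
    using that H unfolding U_def G_def by auto
  moreover have "finite U" "U \<subseteq> A" unfolding U_def using S(1) assms(1) by auto
  ultimately have "G \<alpha> = 0" if "\<alpha> \<in> U" for \<alpha>
    using independent_subspacesD[OF assms(3), of U G \<alpha>] that by blast
  then show "\<forall>i\<in>S. f i = 0" using f_eq unfolding U_def by (auto intro!: sum.neutral)
qed

lemma is_direct_sum_coarsening:
  assumes "is_direct_sum scale I W" "finite A" "A \<subseteq> I" "\<And>\<alpha>. \<alpha> \<in> I - A \<Longrightarrow> W \<alpha> = {0}"
    and "\<phi> ` A \<subseteq> J"
  shows "is_direct_sum scale J (coarsening scale A \<phi> W)"
proof -
  have sub: "\<And>\<alpha>. \<alpha> \<in> I \<Longrightarrow> subspace (W \<alpha>)" and span_W: "span (\<Union>\<alpha>\<in>I. W \<alpha>) = UNIV"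
    and ind: "independent_subspaces scale I W"
    using assms(1) unfolding is_direct_sum_iff by auto
  have "(\<Union>\<alpha>\<in>I. W \<alpha>) \<subseteq> span (\<Union>i\<in>J. coarsening scale A \<phi> W i)"
  proof (intro UN_least subsetI)
    fix \<alpha> x assume "\<alpha> \<in> I" "x \<in> W \<alpha>"
    show "x \<in> span (\<Union>i\<in>J. coarsening scale A \<phi> W i)"
    proof (cases "\<alpha> \<in> A")
      case True
      then have "x \<in> coarsening scale A \<phi> W (\<phi> \<alpha>)" "\<phi> \<alpha> \<in> J"
        using subset_coarsening[OF True] \<open>x \<in> W \<alpha>\<close> assms(5) by auto
      then show ?thesis using span_base[of x "\<Union>i\<in>J. coarsening scale A \<phi> W i"] by blast
    next
      case False
      then have "x = 0" using assms(4) \<open>\<alpha> \<in> I\<close> \<open>x \<in> W \<alpha>\<close> by blast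
      then show ?thesis by (simp add: span_zero)
    qed
  qed
  then have "span (\<Union>\<alpha>\<in>I. W \<alpha>) \<subseteq> span (\<Union>i\<in>J. coarsening scale A \<phi> W i)"
    by (rule span_minimal[OF _ subspace_span])
  then have "span (\<Union>i\<in>J. coarsening scale A \<phi> W i) = UNIV"
    unfolding span_W by blast
  moreover have "\<And>\<alpha>. \<alpha> \<in> A \<Longrightarrow> subspace (W \<alpha>)" using sub assms(3) by blast
  then have "independent_subspaces scale J (coarsening scale A \<phi> W)"
    by (rule independent_subspaces_coarsening[OF assms(2) _ independent_subspaces_subset[OF ind assms(3)]])
  ultimately show ?thesis unfolding is_direct_sum_iff by (simp add: subspace_coarsening)
qed

lemma bracket_coarsening:
  assumes br_add_left: "\<And>x y z. br (x + y) z = br x z + br y z"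
    and br_add_right: "\<And>x y z. br x (y + z) = br x y + br x z"
    and closed: "\<And>\<alpha> \<beta>. \<alpha> \<in> I \<Longrightarrow> \<beta> \<in> I \<Longrightarrow> \<alpha> + \<beta> \<in> I"
    and graded: "\<And>\<alpha> \<beta> x y. \<alpha> \<in> I \<Longrightarrow> \<beta> \<in> I \<Longrightarrow> x \<in> W \<alpha> \<Longrightarrow> y \<in> W \<beta> \<Longrightarrow> br x y \<in> W (\<alpha> + \<beta>)"
    and additive: "\<And>\<alpha> \<beta>. \<phi> (\<alpha> + \<beta>) = \<phi> \<alpha> + \<phi> \<beta>"
    and "finite A" "A \<subseteq> I" "\<And>\<alpha>. \<alpha> \<in> I - A \<Longrightarrow> W \<alpha> = {0}" "\<And>\<alpha>. \<alpha> \<in> I \<Longrightarrow> subspace (W \<alpha>)"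
    and x: "x \<in> coarsening scale A \<phi> W i" and y: "y \<in> coarsening scale A \<phi> W j"
  shows "br x y \<in> coarsening scale A \<phi> W (i + j)"
proof -
  let ?C = "coarsening scale A \<phi> W"
  have sub: "\<And>\<alpha>. \<alpha> \<in> A \<Longrightarrow> subspace (W \<alpha>)" using assms(7,9) by blast
  obtain hx where hx: "\<And>\<alpha>. \<alpha> \<in> A \<Longrightarrow> \<phi> \<alpha> = i \<Longrightarrow> hx \<alpha> \<in> W \<alpha>" "x = sum hx {\<alpha>\<in>A. \<phi> \<alpha> = i}"
    using coarsening_decompose[OF assms(6) sub x] by blast
  obtain hy where hy: "\<And>\<beta>. \<beta> \<in> A \<Longrightarrow> \<phi> \<beta> = j \<Longrightarrow> hy \<beta> \<in> W \<beta>" "y = sum hy {\<beta>\<in>A. \<phi> \<beta> = j}"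
    using coarsening_decompose[OF assms(6) sub y] by blast
  have term_in: "br (hx \<alpha>) (hy \<beta>) \<in> ?C (i + j)"
    if "\<alpha> \<in> {\<alpha>\<in>A. \<phi> \<alpha> = i}" "\<beta> \<in> {\<beta>\<in>A. \<phi> \<beta> = j}" for \<alpha> \<beta>
  proof -
    have I: "\<alpha> \<in> I" "\<beta> \<in> I" "\<alpha> + \<beta> \<in> I" using that assms(7) closed by auto
    have "hx \<alpha> \<in> W \<alpha>" "hy \<beta> \<in> W \<beta>" using hx(1) hy(1) that by auto
    then have in_W: "br (hx \<alpha>) (hy \<beta>) \<in> W (\<alpha> + \<beta>)" using graded I by blast
    show ?thesis
    proof (cases "\<alpha> + \<beta> \<in> A")
      case True
      then have "W (\<alpha> + \<beta>) \<subseteq> ?C (i + j)"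
        using subset_coarsening[of "\<alpha> + \<beta>" A W \<phi>] additive that by simp
      then show ?thesis using in_W by blast
    next
      case False
      then have "br (hx \<alpha>) (hy \<beta>) = 0" using in_W assms(8)[of "\<alpha> + \<beta>"] I by blast
      then show ?thesis using subspace_0[OF subspace_coarsening] by simp
    qed
  qed
  have "(\<Sum>\<beta>\<in>{\<beta>\<in>A. \<phi> \<beta> = j}. \<Sum>\<alpha>\<in>{\<alpha>\<in>A. \<phi> \<alpha> = i}. br (hx \<alpha>) (hy \<beta>)) \<in> ?C (i + j)"
    by (intro subspace_sum[OF subspace_coarsening] term_in)
  then show ?thesis
    unfolding hx(2) hy(2)
    by (simp add: sum_left_additive[of br, OF br_add_left] sum_right_additive[of br, OF br_add_right])
qed

end

context finite_dimensional_vector_space begin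

lemma dim_coarsening:
  assumes "finite A" "\<And>\<alpha>. \<alpha> \<in> A \<Longrightarrow> subspace (W \<alpha>)" "independent_subspaces scale A W"
  shows "dim (coarsening scale A \<phi> W i) = (\<Sum>\<alpha>\<in>{\<alpha>\<in>A. \<phi> \<alpha> = i}. dim (W \<alpha>))"
  unfolding coarsening_def using assms independent_subspaces_subset[OF assms(3)]
  by (intro dim_span_UN_independent_subspaces) auto

end

section \<open>Coarsening a \<open>\<int>\<^sub>+\<^sup>d\<close>-grading\<close>

lemma Zplus_add:
  assumes "\<alpha> \<in> Zplus d" "\<beta> \<in> Zplus d"
  shows "\<alpha> + \<beta> \<in> Zplus d"
proof -
  have "\<alpha> \<noteq> 0" using assms(1) unfolding Zplus_def by blast
  then obtain j where "Poly_Mapping.lookup \<alpha> j \<noteq> 0"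
    using poly_mapping_eqI[of \<alpha> 0] by auto
  then have "Poly_Mapping.lookup (\<alpha> + \<beta>) j \<noteq> 0" by (simp add: lookup_add)
  then have "\<alpha> + \<beta> \<noteq> 0" by auto
  then show ?thesis using assms keys_add[of \<alpha> \<beta>] unfolding Zplus_def by auto
qed

lemma keys_assoc_poly: "Poly_Mapping.keys (assoc_poly scale d g) \<subseteq> {m. Poly_Mapping.keys m \<subseteq> {..<d}}"
proof -
  let ?M = "{m :: nat \<Rightarrow>\<^sub>0 nat. Poly_Mapping.keys m \<subseteq> {..<d}}"
  have zero: "0 \<in> ?M" by simp
  have add: "x + y \<in> ?M" if "x \<in> ?M" "y \<in> ?M" for x y
    using that keys_add[of x y] by auto
  have factor: "Poly_Mapping.keys (1 - Poly_Mapping.single \<alpha> (1::int)) \<subseteq> ?M" if "\<alpha> \<in> Zplus d" for \<alpha>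
    using keys_diff[of 1 "Poly_Mapping.single \<alpha> (1::int)"] that unfolding Zplus_def by auto
  show ?thesis
    unfolding assoc_poly_def
    by (intro keys_prod_subset_submonoid[OF zero add] keys_power_subset_submonoid[OF factor zero add])
      auto
qed

lemma subst_monomials_assoc_poly:
  assumes "\<And>a b. \<phi> (a + b) = \<phi> a + \<phi> b" "\<phi> 0 = 0"
  shows "subst_monomials \<phi> (assoc_poly scale d g) =
    (\<Prod>\<alpha>\<in>{\<alpha>\<in>Zplus d. g \<alpha> \<noteq> {0}}. (1 - monom 1 (\<phi> \<alpha>)) ^ vector_space.dim scale (g \<alpha>))"
proof -
  have "subst_monomials \<phi> (1 - Poly_Mapping.single \<alpha> (1::int)) = 1 - monom 1 (\<phi> \<alpha>)" for \<alpha>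
    by (simp only: subst_monomials_diff subst_monomials_one[of \<phi>, OF assms(2)] subst_monomials_single)
  then show ?thesis
    unfolding assoc_poly_def subst_monomials_prod[of \<phi>, OF assms] subst_monomials_power[of \<phi>, OF assms]
    by simp
qed

lemma (in vector_space) fin_dim_obtain_basis:
  assumes "fin_dim scale"
  obtains Basis where "finite_dimensional_vector_space scale Basis"
proof -
  obtain B where B: "finite B" "span B = UNIV" using assms unfolding fin_dim_def by auto
  obtain C where C: "C \<subseteq> B" "independent C" "B \<subseteq> span C"
    using maximal_independent_subset by blast
  have "span C = UNIV" using span_minimal[OF C(3) subspace_span] B(2) by auto
  then have "finite_dimensional_vector_space scale C"
    using C B(1) finite_subset by unfold_locales auto
  then show thesis by (rule that)
qed

lemma (in vector_space) k_grading_coarsening: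
  assumes "\<And>x y z. br (x + y) z = br x z + br y z" "\<And>x y z. br x (y + z) = br x y + br x z"
    and "\<And>\<alpha> \<beta>. \<alpha> \<in> I \<Longrightarrow> \<beta> \<in> I \<Longrightarrow> \<alpha> + \<beta> \<in> I"
    and "\<And>\<alpha> \<beta> x y. \<alpha> \<in> I \<Longrightarrow> \<beta> \<in> I \<Longrightarrow> x \<in> W \<alpha> \<Longrightarrow> y \<in> W \<beta> \<Longrightarrow> br x y \<in> W (\<alpha> + \<beta>)"
    and "\<And>\<alpha> \<beta>. \<phi> (\<alpha> + \<beta>) = \<phi> \<alpha> + \<phi> \<beta>"
    and direct_sum: "is_direct_sum scale I W"
    and "finite A" "A \<subseteq> I" "\<And>\<alpha>. \<alpha> \<in> I - A \<Longrightarrow> W \<alpha> = {0}"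
    and range: "\<phi> ` A \<subseteq> {1..k}"
  shows "k_grading scale br k (coarsening scale A \<phi> W)"
  unfolding k_grading_def
proof (intro conjI ballI)
  show "is_direct_sum scale {1..k} (coarsening scale A \<phi> W)"
    using is_direct_sum_coarsening[OF direct_sum assms(7-9) range] .
  fix i j x y
  assume "x \<in> coarsening scale A \<phi> W i" "y \<in> coarsening scale A \<phi> W j"
  moreover have "\<And>\<alpha>. \<alpha> \<in> I \<Longrightarrow> subspace (W \<alpha>)"
    using direct_sum unfolding is_direct_sum_iff by blast
  ultimately have "br x y \<in> coarsening scale A \<phi> W (i + j)"
    using bracket_coarsening[of br I W \<phi> A] assms(1-5,7-9) by blast
  moreover have "coarsening scale A \<phi> W (i + j) = {0}" if "\<not> i + j \<le> k"
    using that range by (intro coarsening_eq_zero) auto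
  ultimately show "br x y \<in> (if i + j \<le> k then coarsening scale A \<phi> W (i + j) else {0})"
    by auto
qed

lemma (in finite_dimensional_vector_space) assoc_poly1_coarsening:
  assumes "finite A" "\<And>\<alpha>. \<alpha> \<in> A \<Longrightarrow> subspace (W \<alpha>)" "independent_subspaces scale A W"
    and range: "\<phi> ` A \<subseteq> {1..k}"
  shows "assoc_poly1 scale k (coarsening scale A \<phi> W) = (\<Prod>\<alpha>\<in>A. (1 - monom 1 (\<phi> \<alpha>)) ^ dim (W \<alpha>))"
proof -
  have "assoc_poly1 scale k (coarsening scale A \<phi> W) =
      (\<Prod>i\<in>{1..k}. \<Prod>\<alpha>\<in>{\<alpha>\<in>A. \<phi> \<alpha> = i}. (1 - monom 1 i) ^ dim (W \<alpha>))"
    unfolding assoc_poly1_def using dim_coarsening[OF assms(1-3)] by (simp add: power_sum)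
  also have "\<dots> = (\<Prod>i\<in>{1..k}. \<Prod>\<alpha>\<in>{\<alpha>\<in>A. \<phi> \<alpha> = i}. (1 - monom 1 (\<phi> \<alpha>)) ^ dim (W \<alpha>))"
    by (intro prod.cong refl) simp
  also have "\<dots> = (\<Prod>\<alpha>\<in>A. (1 - monom 1 (\<phi> \<alpha>)) ^ dim (W \<alpha>))"
    by (rule prod.group[OF assms(1) _ range]) simp
  finally show ?thesis .
qed

lemma (in finite_dimensional_vector_space) Zd_grading_coarsening:
  assumes br_add: "\<And>x y z. br (x + y) z = br x z + br y z" "\<And>x y z. br x (y + z) = br x y + br x z"
    and grading: "Zd_grading scale br d g"
    and additive: "\<And>\<alpha> \<beta>. \<phi> (\<alpha> + \<beta>) = \<phi> \<alpha> + \<phi> \<beta>"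
    and pos: "\<And>\<alpha>. \<alpha> \<in> Zplus d \<Longrightarrow> \<phi> \<alpha> > 0"
  obtains k A where "k > 0" "k_grading scale br k (coarsening scale A \<phi> g)"
    "assoc_poly1 scale k (coarsening scale A \<phi> g) = subst_monomials \<phi> (assoc_poly scale d g)"
proof -
  have direct_sum: "is_direct_sum scale (Zplus d) g"
    and graded: "\<And>\<alpha> \<beta> x y. \<alpha> \<in> Zplus d \<Longrightarrow> \<beta> \<in> Zplus d \<Longrightarrow> x \<in> g \<alpha> \<Longrightarrow> y \<in> g \<beta> \<Longrightarrow> br x y \<in> g (\<alpha> + \<beta>)"
    using grading unfolding Zd_grading_def by auto
  then have sub: "\<And>\<alpha>. \<alpha> \<in> Zplus d \<Longrightarrow> subspace (g \<alpha>)" and ind: "independent_subspaces scale (Zplus d) g"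
    unfolding is_direct_sum_iff by auto
  define A where "A = {\<alpha>\<in>Zplus d. g \<alpha> \<noteq> {0}}"
  have A: "finite A" "A \<subseteq> Zplus d" "\<And>\<alpha>. \<alpha> \<in> Zplus d - A \<Longrightarrow> g \<alpha> = {0}"
    unfolding A_def using finite_nonzero_independent_subspaces[OF sub ind] by auto
  define k where "k = Max (insert 1 (\<phi> ` A))"
  have "k > 0" unfolding k_def using A(1) by (intro Max_gr_iff[THEN iffD2]) auto
  have "\<phi> \<alpha> \<le> k" if "\<alpha> \<in> A" for \<alpha> unfolding k_def using A(1) that by (intro Max_ge) auto
  then have range: "\<phi> ` A \<subseteq> {1..k}" using pos A(2) by (auto simp: Suc_le_eq)
  have "\<phi> 0 = 0" using additive[of 0 0] by simp
  have "k_grading scale br k (coarsening scale A \<phi> g)"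
    by (rule k_grading_coarsening[of br "Zplus d" g \<phi>, OF br_add Zplus_add graded additive
          direct_sum A range])
  moreover have "assoc_poly1 scale k (coarsening scale A \<phi> g) = subst_monomials \<phi> (assoc_poly scale d g)"
    unfolding subst_monomials_assoc_poly[of \<phi>, OF additive \<open>\<phi> 0 = 0\<close>]
    using assoc_poly1_coarsening[OF A(1) _ independent_subspaces_subset[OF ind A(2)] range] sub A(2)
    unfolding A_def by auto
  ultimately show thesis using \<open>k > 0\<close> that by blast
qed

theorem mainTheorem1:
  fixes scale :: "'k::field_char_0 \<Rightarrow> 'v::ab_group_add \<Rightarrow> 'v"
    and br :: "'v \<Rightarrow> 'v \<Rightarrow> 'v"
    and d :: nat
    and g :: "(nat \<Rightarrow>\<^sub>0 nat) \<Rightarrow> 'v set"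
  assumes "lie_algebra scale br"
    and "fin_dim scale"
    and "nilpotent_lie scale br"
    and "d \<ge> 1"
    and "Zd_grading scale br d g"
  shows "\<exists>k::nat. k > 0 \<and> (\<exists>g' :: nat \<Rightarrow> 'v set. k_grading scale br k g' \<and>
           poly_length (assoc_poly1 scale k g') = mpoly_length (assoc_poly scale d g))"
proof -
  interpret vector_space scale using assms(1) unfolding lie_algebra_def by blast
  obtain Basis where "finite_dimensional_vector_space scale Basis"
    using fin_dim_obtain_basis[OF assms(2)] .
  then interpret finite_dimensional_vector_space scale Basis .
  have br_add: "\<And>x y z. br (x + y) z = br x z + br y z" "\<And>x y z. br x (y + z) = br x y + br x z"
    using assms(1) unfolding lie_algebra_def by auto
  let ?p = "assoc_poly scale d g"
  have "\<And>m. m \<in> Poly_Mapping.keys ?p \<Longrightarrow> Poly_Mapping.keys m \<subseteq> {..<d}"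
    using keys_assoc_poly by blast
  then obtain N where "N > 0" and inj: "inj_on (digit_weight d N) (Poly_Mapping.keys ?p)"
    by (rule digit_weight_inj_on_finite[OF finite_keys])
  obtain k A where "k > 0" "k_grading scale br k (coarsening scale A (digit_weight d N) g)"
    "assoc_poly1 scale k (coarsening scale A (digit_weight d N) g) = subst_monomials (digit_weight d N) ?p"
    using Zd_grading_coarsening[OF br_add assms(5) digit_weight_add digit_weight_pos[OF \<open>N > 0\<close>]] .
  then show ?thesis using poly_length_subst_monomials[OF inj] by metis
qed

end
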